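(* Let $P$ be a Poisson tensor on $\mathbb{R}^3$, let $H\in C^\infty(\mathbb{R}^3)$, and let $S\in C^\infty(\mathbb{R}^3)$ be a Casimir function for $P$, i.e. $PdS=0$. Let $g$ be the symmetric tensor with components $g^{ij}=H^iH^j-\delta^{ij}\sum_k H^kH^k$. Then at every point of $\mathbb{R}^3$ the vectors $PdH$ and $gdS$ are orthogonal with respect to the Euclidean metric.
   Context: $\mathbb{R}^3$ carries the standard Euclidean metric $h$, used to identify tangent and cotangent spaces with $\mathbb{R}^3$; $H^i=H_i=\partial H/\partial x^i$ in standard coordinates. A Poisson tensor is a skew-symmetric bivector field whose bracket $\{F,G\}=dF\cdot PdG$ satisfies the Jacobi identity. *)

theory Defs
  imports "HOL-Analysis.Analysis"
begin

text \<open>Points of R^3 are vectors of type real^3 (Euclidean metric = inner product).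
  Partial derivative H_i = dH/dx^i in standard coordinates.\<close>
definition pd :: "3 \<Rightarrow> (real^3 \<Rightarrow> real) \<Rightarrow> real^3 \<Rightarrow> real" where
  "pd i f x = frechet_derivative f (at x) (axis i 1)"

fun iter_pd :: "3 list \<Rightarrow> (real^3 \<Rightarrow> real) \<Rightarrow> real^3 \<Rightarrow> real" where
  "iter_pd [] f = f"
| "iter_pd (i # is) f = pd i (iter_pd is f)"

definition smooth :: "(real^3 \<Rightarrow> real) \<Rightarrow> bool" where
  "smooth f \<longleftrightarrow> (\<forall>is x. iter_pd is f differentiable (at x))"

text \<open>Gradient dF, identified with a vector via the Euclidean metric.\<close>
definition grad :: "(real^3 \<Rightarrow> real) \<Rightarrow> real^3 \<Rightarrow> real^3" where
  "grad f x = (\<chi> i. pd i f x)"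

text \<open>Bivector field P (components P x $ i $ j = P^{ij}) and its bracket {F,G} = dF . P dG.\<close>
definition pbracket :: "(real^3 \<Rightarrow> real^3^3) \<Rightarrow> (real^3 \<Rightarrow> real) \<Rightarrow> (real^3 \<Rightarrow> real) \<Rightarrow> real^3 \<Rightarrow> real" where
  "pbracket P F G x = grad F x \<bullet> (P x *v grad G x)"

definition poisson_tensor :: "(real^3 \<Rightarrow> real^3^3) \<Rightarrow> bool" where
  "poisson_tensor P \<longleftrightarrow>
     (\<forall>i j. smooth (\<lambda>x. P x $ i $ j)) \<and>
     (\<forall>x. transpose (P x) = - P x) \<and>
     (\<forall>F G K. smooth F \<longrightarrow> smooth G \<longrightarrow> smooth K \<longrightarrow>
        (\<forall>x. pbracket P F (pbracket P G K) x + pbracket P G (pbracket P K F) x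
             + pbracket P K (pbracket P F G) x = 0))"

definition gtensor :: "(real^3 \<Rightarrow> real) \<Rightarrow> real^3 \<Rightarrow> real^3^3" where
  "gtensor H x = (\<chi> i j. grad H x $ i * grad H x $ j
       - (if i = j then 1 else 0) * (\<Sum>k\<in>UNIV. grad H x $ k * grad H x $ k))"

end

theory Submission
  imports Defs
begin

text \<open>Since \<open>g v = (dH \<cdot> v) dH - |dH|\<^sup>2 v\<close>, the vector \<open>g dS\<close> is a combination of
  \<open>dH\<close> and \<open>dS\<close>. By skew-symmetry of P, \<open>P dH\<close> is orthogonal to \<open>dH\<close>, and
  \<open>(P dH) \<cdot> dS = - dH \<cdot> (P dS) = 0\<close> because S is a Casimir.\<close>

lemma skew_matrix_inner:
  fixes M :: "real^'n^'n"
  assumes "transpose M = - M"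
  shows "(M *v a) \<bullet> b = - (a \<bullet> (M *v b))"
proof -
  have "(M *v a) \<bullet> b = a \<bullet> (transpose M *v b)"
    by (metis vector_transpose_matrix dot_lmul_matrix)
  also have "transpose M *v b = - (M *v b)"
    using assms by (simp add: vec_eq_iff matrix_vector_mult_def sum_negf)
  finally show ?thesis by simp
qed

lemma skew_matrix_inner_self:
  fixes M :: "real^'n^'n"
  assumes "transpose M = - M"
  shows "(M *v a) \<bullet> a = 0"
  using skew_matrix_inner[OF assms, of a a] by (simp add: inner_commute)

lemma outer_minus_norm_matrix_mult:
  fixes a b :: "real^'n"
  shows "(\<chi> i j. a $ i * a $ j - (if i = j then 1 else 0) * (\<Sum>k\<in>UNIV. a $ k * a $ k)) *v b
       = (a \<bullet> b) *\<^sub>R a - (a \<bullet> a) *\<^sub>R b" (is "?g *v b = ?rhs")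
unfolding vec_eq_iff
proof
  fix i
  have delta: "(\<Sum>j\<in>UNIV. (if i = j then 1 else 0) * c * b $ j) = c * b $ i" for c :: real
    by (subst sum.cong [OF refl, of _ _ "\<lambda>j. if i = j then c * b $ j else 0"]) auto
  have norm2: "(\<Sum>k\<in>UNIV. a $ k * a $ k) = a \<bullet> a"
    by (simp add: inner_vec_def)
  have "(?g *v b) $ i
      = (\<Sum>j\<in>UNIV. a $ i * (a $ j * b $ j)) - (\<Sum>j\<in>UNIV. (if i = j then 1 else 0) * (a \<bullet> a) * b $ j)"
    by (simp add: matrix_vector_mult_def norm2 left_diff_distrib sum_subtractf mult.assoc)
  also have "\<dots> = a $ i * (a \<bullet> b) - (a \<bullet> a) * b $ i"
    by (simp only: delta inner_vec_def [of a b] inner_real_def sum_distrib_left)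
  also have "\<dots> = ?rhs $ i"
    by (simp add: mult.commute)
  finally show "(?g *v b) $ i = ?rhs $ i" .
qed

lemma gtensor_mult:
  "gtensor H x *v v = (grad H x \<bullet> v) *\<^sub>R grad H x - (grad H x \<bullet> grad H x) *\<^sub>R v"
  unfolding gtensor_def by (rule outer_minus_norm_matrix_mult)

theorem mainTheorem2:
  fixes P :: "real^3 \<Rightarrow> real^3^3" and H S :: "real^3 \<Rightarrow> real"
  assumes "poisson_tensor P"
    and "smooth H"
    and "smooth S"
    and "\<forall>x. P x *v grad S x = 0"
  shows "\<forall>x. (P x *v grad H x) \<bullet> (gtensor H x *v grad S x) = 0"
proof
  fix x
  have skew: "transpose (P x) = - P x"
    using assms(1) by (simp add: poisson_tensor_def)
  have "(P x *v grad H x) \<bullet> grad H x = 0"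
    using skew by (rule skew_matrix_inner_self)
  moreover have "(P x *v grad H x) \<bullet> grad S x = 0"
    using skew_matrix_inner[OF skew] assms(4) by simp
  ultimately show "(P x *v grad H x) \<bullet> (gtensor H x *v grad S x) = 0"
    by (simp add: gtensor_mult inner_diff_right)
qed

end
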